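(* Let $\langle\cdot\rangle$ be a probability measure on $\Omega$ that is stationary (the shifts $a\mapsto a(\cdot+z)$, $z\in\mathbb Z^d$, preserve $\langle\cdot\rangle$), and let $p>d+1$. Then for every stationary random field $u$ and every bond $b\in\mathbb B^d$, $$\big\langle|\nabla u(b)|^2\,\mathrm{dist}_a^{-p}(x_b,y_b)\big\rangle\le C(p,d)\sum_{i=1}^d\big\langle a(\{0,e_i\})\,|\nabla u(\{0,e_i\})|^2\big\rangle,$$ where $C(p,d):=\sum_{k=0}^\infty 2^{k(1-p)}|B_{2^{k+1}}(0)|<\infty$ (with the convention $1/\infty=0$).
   Context: $\mathbb B^d$ is the set of nearest-neighbour bonds $\{x,x+e_i\}$ of $\mathbb Z^d$; $x_b,y_b$ endpoints of $b$ with $y_b-x_b\in\{e_1,\dots,e_d\}$; $\nabla u(b)=u(y_b)-u(x_b)$. $\Omega=[0,1]^{\mathbb B^d}$; $a(\cdot+z)(b)=a(b+z)$ with $\{x,y\}+z=\{x+z,y+z\}$. Chemical distance $\mathrm{dist}_a(x,y)=\inf\{\sum_{b\in\pi}a(b)^{-1}:\pi$ a path from $x$ to $y\}$, $1/0=\infty$. $B_R(0)=([-R,R]\cap\mathbb Z)^d$, $|\cdot|$ cardinality. A random field $u:\Omega\times\mathbb Z^d\to\mathbb R$ is stationary if measurable and $u(a(\cdot+z),x)=u(a,x+z)$ for all $x,z$ and a.e. $a$. *)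

theory Defs
  imports "HOL-Probability.Probability"
begin

text \<open>Points of Z^d are int^'n with d = CARD('n). A bond {x, x+e_i} is encoded
  uniquely as the pair (x, i), so x_b = x and y_b = x + e_i.\<close>

type_synonym 'n bond = "(int^'n) \<times> 'n"

definition unitv :: "'n::finite \<Rightarrow> int^'n" where
  "unitv i = axis i 1"

definition xb :: "'n::finite bond \<Rightarrow> int^'n" where "xb b = fst b"
definition yb :: "'n::finite bond \<Rightarrow> int^'n" where "yb b = fst b + unitv (snd b)"

definition bshift :: "'n::finite bond \<Rightarrow> int^'n \<Rightarrow> 'n bond" where
  "bshift b z = (fst b + z, snd b)"

definition cshift :: "int^'n \<Rightarrow> ('n::finite bond \<Rightarrow> real) \<Rightarrow> ('n bond \<Rightarrow> real)" where
  "cshift z a = (\<lambda>b. a (bshift b z))"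

definition Omega_M :: "('n::finite bond \<Rightarrow> real) measure" where
  "Omega_M = PiM UNIV (\<lambda>_. restrict_space borel {0..1::real})"

definition grad :: "(int^'n \<Rightarrow> real) \<Rightarrow> 'n::finite bond \<Rightarrow> real" where
  "grad u b = u (yb b) - u (xb b)"

definition nn :: "int^'n \<Rightarrow> int^'n \<Rightarrow> bool" where
  "nn x y \<longleftrightarrow> (\<exists>i::'n::finite. y = x + unitv i \<or> x = y + unitv i)"

definition bond_of :: "int^'n \<Rightarrow> int^'n \<Rightarrow> 'n::finite bond" where
  "bond_of x y = (if \<exists>i. y = x + unitv i then (x, SOME i. y = x + unitv i)
                  else (y, SOME i. x = y + unitv i))"

definition is_path :: "(int^'n::finite) list \<Rightarrow> int^'n \<Rightarrow> int^'n \<Rightarrow> bool" where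
  "is_path ps x y \<longleftrightarrow> ps \<noteq> [] \<and> hd ps = x \<and> last ps = y \<and>
     (\<forall>k. Suc k < length ps \<longrightarrow> nn (ps ! k) (ps ! Suc k))"

definition bweight :: "('n::finite bond \<Rightarrow> real) \<Rightarrow> 'n bond \<Rightarrow> ennreal" where
  "bweight a b = (if a b = 0 then \<infinity> else ennreal (1 / a b))"

definition path_len :: "('n::finite bond \<Rightarrow> real) \<Rightarrow> (int^'n) list \<Rightarrow> ennreal" where
  "path_len a ps = sum_list (map (\<lambda>(x,y). bweight a (bond_of x y)) (zip ps (tl ps)))"

definition chem_dist :: "('n::finite bond \<Rightarrow> real) \<Rightarrow> int^'n \<Rightarrow> int^'n \<Rightarrow> ennreal" where
  "chem_dist a x y = (INF ps \<in> {ps. is_path ps x y}. path_len a ps)"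

definition chem_dist_pow :: "real \<Rightarrow> ('n::finite bond \<Rightarrow> real) \<Rightarrow> int^'n \<Rightarrow> int^'n \<Rightarrow> real" where
  "chem_dist_pow p a x y =
     (if chem_dist a x y = \<infinity> then 0 else enn2real (chem_dist a x y) powr (- p))"

definition box :: "int \<Rightarrow> (int^'n::finite) set" where
  "box R = {x. \<forall>i. \<bar>x $ i\<bar> \<le> R}"

definition Cpd :: "real \<Rightarrow> 'n::finite itself \<Rightarrow> nat \<Rightarrow> real" where
  "Cpd p _ k = 2 powr (real k * (1 - p)) * real (card (box (2 ^ (k+1)) :: (int^'n) set))"

definition stationary_measure :: "('n::finite bond \<Rightarrow> real) measure \<Rightarrow> bool" where
  "stationary_measure P \<longleftrightarrow> prob_space P \<and> sets P = sets Omega_M \<and>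
     (\<forall>z. distr P P (cshift z) = P)"

definition stationary_field ::
  "('n::finite bond \<Rightarrow> real) measure \<Rightarrow> (('n bond \<Rightarrow> real) \<Rightarrow> int^'n \<Rightarrow> real) \<Rightarrow> bool" where
  "stationary_field P u \<longleftrightarrow> (\<forall>x. (\<lambda>a. u a x) \<in> borel_measurable P) \<and>
     (\<forall>x z. AE a in P. u (cshift z a) x = u a (x + z))"

end

theory Submission
  imports Defs
begin

text \<open>If a nearest-neighbour path from x to y has length L \<le> R, all its bonds lie in x + B_R
  (every weight 1/a(b) is at least 1), and telescoping along the path followed by Cauchy-Schwarz
  with weights 1/a(b) gives |u(y) - u(x)|^2 \<le> L * (sum of a(b) |grad u(b)|^2 over the bonds of
  x + B_R). For nearly optimal paths, with D = dist_a(x_b, y_b) in [2^k, 2^(k+1)) and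
  R = 2^(k+1), this bounds |grad u(b)|^2 D^(-p) by 2^(k(1-p)) times the energy in x_b + B_R,
  hence by the sum of these terms over all k. After integration, stationarity replaces the
  expected energy of each bond by that of the parallel bond at the origin, which produces the
  factor |B_(2^(k+1))(0)|; the series converges because |B_(2^(k+1))(0)| \<le> 8^d 2^(kd) and
  p > d + 1.\<close>

definition path_bonds :: "(int^'n::finite) list \<Rightarrow> 'n bond set" where
  "path_bonds ps = set (map (\<lambda>(x, y). bond_of x y) (zip ps (tl ps)))"

definition bond_energy :: "('n::finite bond \<Rightarrow> real) \<Rightarrow> (int^'n \<Rightarrow> real) \<Rightarrow> 'n bond \<Rightarrow> real" where
  "bond_energy a u b = a b * (grad u b)\<^sup>2"

definition box_energy :: "('n::finite bond \<Rightarrow> real) \<Rightarrow> (int^'n \<Rightarrow> real) \<Rightarrow> int^'n \<Rightarrow> int \<Rightarrow> real" where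
  "box_energy a u x R = (\<Sum>z\<in>box R. \<Sum>i\<in>UNIV. bond_energy a u (x + z, i))"

lemma path_bonds_simps [simp]:
  "path_bonds [] = {}"
  "path_bonds [x] = {}"
  "path_bonds (x # y # r) = insert (bond_of x y) (path_bonds (y # r))"
  by (auto simp: path_bonds_def)

lemma finite_path_bonds [simp]: "finite (path_bonds ps)"
  by (simp add: path_bonds_def)

lemma path_len_simps [simp]:
  "path_len a [] = 0"
  "path_len a [x] = 0"
  "path_len a (x # y # r) = bweight a (bond_of x y) + path_len a (y # r)"
  by (auto simp: path_len_def)

lemma is_path_imp_successively_nn: "is_path ps x y \<Longrightarrow> successively nn ps"
  by (simp add: is_path_def successively_conv_nth)

lemma ends_bond_of:
  assumes "nn x y"
  shows "(xb (bond_of x y) = x \<and> yb (bond_of x y) = y) \<or> (xb (bond_of x y) = y \<and> yb (bond_of x y) = x)"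
proof (cases "\<exists>i. y = x + unitv i")
  case True
  then have "y = x + unitv (SOME i. y = x + unitv i)" by (rule someI_ex)
  then show ?thesis using True by (simp add: bond_of_def xb_def yb_def)
next
  case False
  then have "\<exists>i. x = y + unitv i" using assms by (auto simp: nn_def)
  then have "x = y + unitv (SOME i. x = y + unitv i)" by (rule someI_ex)
  then show ?thesis using False by (simp add: bond_of_def xb_def yb_def)
qed

lemma abs_grad_bond_of: "nn x y \<Longrightarrow> \<bar>grad u (bond_of x y)\<bar> = \<bar>u y - u x\<bar>"
  using ends_bond_of[of x y] by (auto simp: grad_def)

lemma ends_in_path_bonds: "successively nn ps \<Longrightarrow> b \<in> path_bonds ps \<Longrightarrow> xb b \<in> set ps \<and> yb b \<in> set ps"
  by (induction ps rule: induct_list012) (use ends_bond_of in auto)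

text \<open>Summing over the set of bonds rather than the list of steps suffices: either the first
  vertex is visited again, or the bond of the first step is not crossed again.\<close>

lemma abs_diff_le_sum_path_bonds:
  assumes "successively nn ps" "v \<in> set ps" "w \<in> set ps"
  shows "\<bar>u v - u w\<bar> \<le> (\<Sum>b\<in>path_bonds ps. \<bar>grad u b\<bar>)"
  using assms
proof (induction ps arbitrary: v w rule: induct_list012)
  case (3 x y r)
  let ?S = "\<lambda>ps. \<Sum>b\<in>path_bonds ps. \<bar>grad u b\<bar>"
  have chain: "successively nn (y # r)" and nxy: "nn x y" using "3.prems"(1) by simp_all
  have IH: "\<bar>u v' - u w'\<bar> \<le> ?S (y # r)" if "v' \<in> set (y # r)" "w' \<in> set (y # r)" for v' w'
    using "3.IH"(2)[OF chain that] .
  have mono: "?S (y # r) \<le> ?S (x # y # r)"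
    by (rule sum_mono2) auto
  have from_x: "\<bar>u w' - u x\<bar> \<le> ?S (x # y # r)" if w': "w' \<in> set (y # r)" for w'
  proof (cases "x \<in> set (y # r)")
    case True
    with IH[OF w' True] mono show ?thesis by linarith
  next
    case False
    have "bond_of x y \<notin> path_bonds (y # r)"
      using ends_in_path_bonds[OF chain] ends_bond_of[OF nxy] False by metis
    then have "?S (x # y # r) = \<bar>u y - u x\<bar> + ?S (y # r)"
      by (simp add: abs_grad_bond_of[OF nxy])
    moreover have "\<bar>u w' - u y\<bar> \<le> ?S (y # r)" using IH[OF w'] by simp
    ultimately show ?thesis by linarith
  qed
  consider "v = x" "w = x" | "v = x" "w \<in> set (y # r)" | "v \<in> set (y # r)" "w = x"
    | "v \<in> set (y # r)" "w \<in> set (y # r)"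
    using "3.prems" by auto
  then show ?case
  proof cases
    case 1
    then show ?thesis by (simp add: sum_nonneg)
  next
    case 2
    then show ?thesis using from_x[of w] by (simp add: abs_minus_commute)
  next
    case 3
    then show ?thesis using from_x[of v] by simp
  next
    case 4
    then show ?thesis using IH[of v w] mono by linarith
  qed
qed auto

lemma one_le_bweight: "0 \<le> a b \<Longrightarrow> a b \<le> 1 \<Longrightarrow> 1 \<le> bweight a b"
  by (auto simp: bweight_def field_simps intro!: ennreal_leI)

lemma length_le_path_len:
  assumes "\<forall>b. 0 \<le> a b \<and> a b \<le> 1"
  shows "of_nat (length ps - 1) \<le> path_len a ps"
proof (induction ps rule: induct_list012)
  case (3 x y r)
  have "1 \<le> bweight a (bond_of x y)" using assms one_le_bweight by blast
  with 3 have "1 + of_nat (length (y # r) - 1) \<le> bweight a (bond_of x y) + path_len a (y # r)"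
    by (intro add_mono) auto
  then show ?case by simp
qed auto

lemma successively_nn_in_box:
  "successively nn ps \<Longrightarrow> v \<in> set ps \<Longrightarrow> v - hd ps \<in> box (int (length ps - 1))"
proof (induction ps arbitrary: v rule: induct_list012)
  case (3 x y r)
  have step: "\<bar>(y - x) $ i\<bar> \<le> 1" for i
    using "3.prems"(1) by (auto simp: nn_def unitv_def axis_def)
  show ?case
  proof (cases "v = x")
    case False
    with 3 have rest: "\<bar>(v - y) $ i\<bar> \<le> int (length (y # r) - 1)" for i
      by (simp add: box_def)
    have "\<bar>(v - x) $ i\<bar> \<le> int (length (x # y # r) - 1)" for i
      using abs_triangle_ineq[of "(v - y) $ i" "(y - x) $ i"] rest[of i] step[of i] by simp
    then show ?thesis by (simp add: box_def)
  qed (simp add: box_def)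
qed (auto simp: box_def)

lemma sum_bweight_path_bonds_le: "(\<Sum>b\<in>path_bonds ps. bweight a b) \<le> path_len a ps"
proof (induction ps rule: induct_list012)
  case (3 x y r)
  have "(\<Sum>b\<in>path_bonds (x # y # r). bweight a b)
      \<le> bweight a (bond_of x y) + (\<Sum>b\<in>path_bonds (y # r). bweight a b)"
    by (simp add: sum.insert_if)
  also have "\<dots> \<le> bweight a (bond_of x y) + path_len a (y # r)"
    using "3.IH"(2) by (rule add_left_mono)
  finally show ?case by simp
qed auto

lemma box_eq_image_PiE: "box R = vec_lambda ` (PiE UNIV (\<lambda>_. {-R..R}))"
proof
  show "box R \<subseteq> vec_lambda ` (PiE UNIV (\<lambda>_. {-R..R}))"
  proof
    fix v assume "v \<in> box R"
    then have "vec_nth v \<in> PiE UNIV (\<lambda>_. {-R..R})"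
      by (auto simp: box_def abs_le_iff minus_le_iff)
    then show "v \<in> vec_lambda ` (PiE UNIV (\<lambda>_. {-R..R}))"
      by (metis image_eqI vec_nth_inverse)
  qed
qed (auto simp: box_def PiE_iff abs_le_iff minus_le_iff)

lemma finite_box [simp]: "finite (box R :: (int^'n::finite) set)"
  unfolding box_eq_image_PiE by (intro finite_imageI finite_PiE) auto

lemma card_box_le: "card (box R :: (int^'n::finite) set) \<le> nat (2 * R + 1) ^ CARD('n)"
proof -
  have "card (box R :: (int^'n) set) \<le> card (PiE (UNIV :: 'n set) (\<lambda>_. {-R..R}))"
    unfolding box_eq_image_PiE by (rule card_image_le) (intro finite_PiE, auto)
  also have "\<dots> = nat (2 * R + 1) ^ CARD('n)"
    by (simp add: card_PiE)
  finally show ?thesis .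
qed

lemma sum_bond_energy_le_box_energy:
  assumes "\<forall>b. 0 \<le> a b" "finite E" "\<forall>b\<in>E. fst b - x \<in> box R"
  shows "(\<Sum>b\<in>E. bond_energy a u b) \<le> box_energy a u x R"
proof -
  let ?shift = "\<lambda>(z, i). (x + z, i :: 'a)"
  have "E \<subseteq> ?shift ` (box R \<times> UNIV)"
  proof
    fix b assume "b \<in> E"
    then show "b \<in> ?shift ` (box R \<times> UNIV)"
      using assms(3) by (intro image_eqI[of _ _ "(fst b - x, snd b)"]) auto
  qed
  then have "(\<Sum>b\<in>E. bond_energy a u b) \<le> (\<Sum>b\<in>?shift ` (box R \<times> UNIV). bond_energy a u b)"
    using assms(1) by (intro sum_mono2) (auto simp: bond_energy_def)
  also have "\<dots> = box_energy a u x R"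
    by (subst sum.reindex) (auto simp: inj_on_def box_energy_def sum.cartesian_product prod.case_distrib)
  finally show ?thesis .
qed

lemma sq_sum_abs_le_weighted:
  fixes w g :: "'a \<Rightarrow> real"
  assumes "\<forall>b\<in>E. 0 < w b"
  shows "(\<Sum>b\<in>E. \<bar>g b\<bar>)\<^sup>2 \<le> (\<Sum>b\<in>E. 1 / w b) * (\<Sum>b\<in>E. w b * (g b)\<^sup>2)"
proof -
  have cancel: "sqrt (1 / w b) * (sqrt (w b) * \<bar>g b\<bar>) = \<bar>g b\<bar>" if "b \<in> E" for b
  proof -
    have "sqrt (1 / w b) * sqrt (w b) = 1"
      using assms that by (simp add: real_sqrt_divide less_imp_neq[symmetric])
    then show ?thesis by (metis mult.assoc mult_1)
  qed
  have "(\<Sum>b\<in>E. \<bar>g b\<bar>) = (\<Sum>b\<in>E. sqrt (1 / w b) * (sqrt (w b) * \<bar>g b\<bar>))"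
    by (intro sum.cong refl) (simp only: cancel)
  then have "(\<Sum>b\<in>E. \<bar>g b\<bar>)\<^sup>2 \<le> (\<Sum>b\<in>E. (sqrt (1 / w b))\<^sup>2) * (\<Sum>b\<in>E. (sqrt (w b) * \<bar>g b\<bar>)\<^sup>2)"
    using Cauchy_Schwarz_ineq_sum by metis
  also have "\<dots> = (\<Sum>b\<in>E. 1 / w b) * (\<Sum>b\<in>E. w b * (g b)\<^sup>2)"
    using assms by (intro arg_cong2[where f = "(*)"] sum.cong) (auto simp: power_mult_distrib)
  finally show ?thesis .
qed

lemma sum_inverse_path_bonds_le:
  assumes "\<forall>b. 0 \<le> a b" and "path_len a ps = ennreal L" and "0 \<le> L"
  shows "\<forall>b\<in>path_bonds ps. 0 < a b" and "(\<Sum>b\<in>path_bonds ps. 1 / a b) \<le> L"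
proof -
  have sum_le: "(\<Sum>b\<in>path_bonds ps. bweight a b) \<le> ennreal L"
    using sum_bweight_path_bonds_le[of a ps] assms(2) by simp
  show pos: "\<forall>b\<in>path_bonds ps. 0 < a b"
  proof
    fix b assume "b \<in> path_bonds ps"
    then have "bweight a b \<le> ennreal L"
      using member_le_sum[of b "path_bonds ps" "bweight a"] sum_le by simp
    then have "a b \<noteq> 0" by (auto simp: bweight_def top_unique)
    then show "0 < a b" using assms(1) by (metis order_less_le)
  qed
  have "ennreal (\<Sum>b\<in>path_bonds ps. 1 / a b) = (\<Sum>b\<in>path_bonds ps. bweight a b)"
    using pos by (subst sum_ennreal[symmetric]) (auto simp: bweight_def intro!: sum.cong)
  with sum_le assms(3) show "(\<Sum>b\<in>path_bonds ps. 1 / a b) \<le> L"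
    by (metis ennreal_le_iff)
qed

lemma sq_diff_le_path_len_mult_box_energy:
  fixes u :: "int^'n::finite \<Rightarrow> real"
  assumes a01: "\<forall>b. 0 \<le> a b \<and> a b \<le> 1"
    and path: "is_path ps x y"
    and len: "path_len a ps = ennreal L" "0 \<le> L" "L \<le> real_of_int R"
  shows "(u y - u x)\<^sup>2 \<le> L * box_energy a u x R"
proof -
  define E where "E = path_bonds ps"
  have chain: "successively nn ps" using path by (rule is_path_imp_successively_nn)
  have pos: "\<forall>b\<in>E. 0 < a b" and inv: "(\<Sum>b\<in>E. 1 / a b) \<le> L"
    using sum_inverse_path_bonds_le[of a ps L] a01 len by (simp_all add: E_def)
  have "\<bar>u y - u x\<bar> \<le> (\<Sum>b\<in>E. \<bar>grad u b\<bar>)"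
    unfolding E_def using path by (intro abs_diff_le_sum_path_bonds[OF chain]) (auto simp: is_path_def)
  then have "(u y - u x)\<^sup>2 \<le> (\<Sum>b\<in>E. \<bar>grad u b\<bar>)\<^sup>2"
    by (metis abs_ge_zero power2_abs power_mono)
  also have "\<dots> \<le> (\<Sum>b\<in>E. 1 / a b) * (\<Sum>b\<in>E. bond_energy a u b)"
    unfolding bond_energy_def using pos by (rule sq_sum_abs_le_weighted)
  also have "\<dots> \<le> L * box_energy a u x R"
  proof (rule mult_mono[OF inv _ len(2)])
    have "real (length ps - 1) \<le> L"
      using length_le_path_len[OF a01, of ps] len by (simp add: ennreal_of_nat_eq_real_of_nat)
    then have "real_of_int (int (length ps - 1)) \<le> real_of_int R"
      using len(3) by simp
    then have "box (int (length ps - 1)) \<subseteq> box R"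
      unfolding of_int_le_iff by (auto simp: box_def intro: order_trans)
    then have "\<forall>b\<in>E. fst b - x \<in> box R"
      using successively_nn_in_box[OF chain] ends_in_path_bonds[OF chain] path
      by (auto simp: E_def xb_def is_path_def)
    then show "(\<Sum>b\<in>E. bond_energy a u b) \<le> box_energy a u x R"
      using a01 by (intro sum_bond_energy_le_box_energy) (auto simp: E_def)
    show "0 \<le> (\<Sum>b\<in>E. bond_energy a u b)"
      using a01 by (auto simp: bond_energy_def intro: sum_nonneg)
  qed
  finally show ?thesis .
qed

lemma box_energy_nonneg: "\<forall>b. 0 \<le> a b \<Longrightarrow> 0 \<le> box_energy a u x R"
  by (auto simp: box_energy_def bond_energy_def intro!: sum_nonneg)

lemma one_le_chem_dist:
  assumes "\<forall>b. 0 \<le> a b \<and> a b \<le> 1" and "x \<noteq> y"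
  shows "1 \<le> chem_dist a x y"
  unfolding chem_dist_def
proof (rule INF_greatest)
  fix ps assume "ps \<in> {ps. is_path ps x y}"
  then have "ps \<noteq> []" "hd ps = x" "last ps = y"
    by (simp_all add: is_path_def)
  with assms(2) have "2 \<le> length ps"
    by (cases ps rule: remdups_adj.cases) auto
  then have "(1::ennreal) \<le> of_nat (length ps - 1)" by simp
  also have "\<dots> \<le> path_len a ps" by (rule length_le_path_len[OF assms(1)])
  finally show "1 \<le> path_len a ps" .
qed

lemma sq_diff_le_chem_dist_mult_box_energy:
  fixes u :: "int^'n::finite \<Rightarrow> real"
  assumes a01: "\<forall>b. 0 \<le> a b \<and> a b \<le> 1"
    and D: "chem_dist a x y = ennreal D" "0 \<le> D" "D < real_of_int R"
  shows "(u y - u x)\<^sup>2 \<le> D * box_energy a u x R"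
proof (rule field_le_epsilon)
  fix e :: real assume e: "0 < e"
  define S where "S = box_energy a u x R"
  have S0: "0 \<le> S" unfolding S_def using a01 by (intro box_energy_nonneg) simp
  define d where "d = min (e / (S + 1)) (R - D)"
  have d0: "0 < d" using e S0 D(3) by (simp add: d_def)
  have "chem_dist a x y < ennreal (D + d)"
    using D(1,2) d0 by (simp add: ennreal_less_iff)
  then obtain ps where path: "is_path ps x y" and len: "path_len a ps < ennreal (D + d)"
    unfolding chem_dist_def by (auto simp: INF_less_iff)
  define L where "L = enn2real (path_len a ps)"
  have L: "path_len a ps = ennreal L" "0 \<le> L"
    using len by (auto simp: L_def ennreal_enn2real_if top_unique)
  have LD: "L < D + d" using len L by (simp add: ennreal_less_iff)
  have "(u y - u x)\<^sup>2 \<le> L * S"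
    unfolding S_def using LD d_def
    by (intro sq_diff_le_path_len_mult_box_energy[OF a01 path L]) linarith
  also have "\<dots> \<le> (D + d) * S"
    using LD S0 by (intro mult_right_mono) auto
  also have "\<dots> = D * S + d * S"
    by (rule distrib_right)
  also have "d * S \<le> e / (S + 1) * S"
    using S0 by (intro mult_right_mono) (auto simp: d_def)
  also have "e / (S + 1) * S \<le> e"
    using S0 e by (simp add: field_simps)
  finally show "(u y - u x)\<^sup>2 \<le> D * box_energy a u x R + e"
    by (simp add: S_def)
qed

lemma dyadic_scale:
  fixes D :: real
  assumes "1 \<le> D"
  obtains k :: nat where "2 ^ k \<le> D" "D < 2 ^ (k + 1)"
proof
  define k where "k = nat \<lfloor>log 2 D\<rfloor>"
  have k: "real k = of_int \<lfloor>log 2 D\<rfloor>"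
    using assms by (simp add: k_def)
  have D_eq: "2 powr (log 2 D) = D"
    using assms by simp
  have "2 powr real k \<le> 2 powr (log 2 D)"
    using k by simp
  then show "2 ^ k \<le> D"
    using D_eq by (simp add: powr_realpow)
  have "log 2 D < real k + 1"
    using k by linarith
  then have "2 powr (log 2 D) < 2 powr (real k + 1)"
    by (rule powr_less_mono) simp
  then show "D < 2 ^ (k + 1)"
    using D_eq powr_realpow[of 2 "k + 1"] by (simp add: add.commute)
qed

lemma sq_diff_chem_dist_pow_le_dyadic_term:
  fixes u :: "int^'n::finite \<Rightarrow> real"
  assumes a01: "\<forall>b. 0 \<le> a b \<and> a b \<le> 1" and "1 < p" and "x \<noteq> y"
  obtains k :: nat where "(u y - u x)\<^sup>2 * chem_dist_pow p a x y
    \<le> 2 powr (real k * (1 - p)) * box_energy a u x (2 ^ (k + 1))"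
proof (cases "chem_dist a x y = \<infinity>")
  case True
  then have "chem_dist_pow p a x y = 0" by (simp add: chem_dist_pow_def)
  moreover have "0 \<le> box_energy a u x (2 ^ (0 + 1))"
    using a01 by (intro box_energy_nonneg) simp
  ultimately show ?thesis by (intro that[of 0]) simp
next
  case False
  define D where "D = enn2real (chem_dist a x y)"
  have CD: "chem_dist a x y = ennreal D" and D0: "0 \<le> D"
    using False by (simp_all add: D_def ennreal_enn2real_if)
  have "ennreal 1 \<le> ennreal D"
    using one_le_chem_dist[OF a01 assms(3)] CD by simp
  then have D1: "1 \<le> D" using D0 by simp
  obtain k :: nat where k: "2 ^ k \<le> D" "D < 2 ^ (k + 1)"
    using dyadic_scale[OF D1] .
  define S where "S = box_energy a u x (2 ^ (k + 1))"
  have S0: "0 \<le> S" unfolding S_def using a01 by (intro box_energy_nonneg) simp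
  have sq: "(u y - u x)\<^sup>2 \<le> D * S"
    unfolding S_def using k(2) by (intro sq_diff_le_chem_dist_mult_box_energy[OF a01 CD D0]) simp
  have "(u y - u x)\<^sup>2 * chem_dist_pow p a x y = (u y - u x)\<^sup>2 * D powr (- p)"
    using False by (simp add: chem_dist_pow_def D_def)
  also have "\<dots> \<le> D * S * D powr (- p)"
    using sq by (rule mult_right_mono) simp
  also have "\<dots> = D powr (1 - p) * S"
    using powr_add[of D 1 "- p"] D1 by (simp add: mult_ac)
  also have "\<dots> \<le> (2 powr real k) powr (1 - p) * S"
  proof (rule mult_right_mono[OF _ S0])
    have "2 powr real k \<le> D" using k(1) by (simp add: powr_realpow)
    then show "D powr (1 - p) \<le> (2 powr real k) powr (1 - p)"
      using assms(2) by (intro powr_mono2') simp_all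
  qed
  also have "\<dots> = 2 powr (real k * (1 - p)) * S"
    by (simp add: powr_powr)
  finally show ?thesis
    using that S_def by blast
qed

lemma ennreal_sq_diff_chem_dist_pow_le_suminf:
  fixes u :: "int^'n::finite \<Rightarrow> real"
  assumes a01: "\<forall>b. 0 \<le> a b \<and> a b \<le> 1" and "1 < p" and "x \<noteq> y"
  shows "ennreal ((u y - u x)\<^sup>2 * chem_dist_pow p a x y)
    \<le> (\<Sum>k. ennreal (2 powr (real k * (1 - p))) * ennreal (box_energy a u x (2 ^ (k + 1))))"
proof -
  let ?f = "\<lambda>k. ennreal (2 powr (real k * (1 - p))) * ennreal (box_energy a u x (2 ^ (k + 1)))"
  obtain k where "(u y - u x)\<^sup>2 * chem_dist_pow p a x y
    \<le> 2 powr (real k * (1 - p)) * box_energy a u x (2 ^ (k + 1))"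
    using sq_diff_chem_dist_pow_le_dyadic_term[OF assms] .
  then have "ennreal ((u y - u x)\<^sup>2 * chem_dist_pow p a x y) \<le> ?f k"
    using a01 by (simp add: ennreal_leI ennreal_mult[symmetric] box_energy_nonneg)
  also have "?f k \<le> suminf ?f"
    using sum_le_suminf[of ?f "{k}"] by simp
  finally show ?thesis .
qed

lemma space_Omega_M: "space Omega_M = {a. \<forall>b. 0 \<le> a b \<and> a b \<le> 1}"
  by (auto simp: Omega_M_def space_PiM PiE_iff)

lemma measurable_component_Omega_M:
  "(\<lambda>a. a b) \<in> measurable Omega_M (restrict_space borel {0..1::real})"
  unfolding Omega_M_def by (rule measurable_component_singleton) simp

lemma cshift_measurable: "cshift z \<in> measurable Omega_M Omega_M"
  unfolding cshift_def[abs_def]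
proof (subst (2) Omega_M_def, rule measurable_PiM_single')
  show "(\<lambda>a. a (bshift b z)) \<in> measurable Omega_M (restrict_space borel {0..1::real})" for b
    by (rule measurable_component_Omega_M)
  show "(\<lambda>a b. a (bshift b z)) \<in> space Omega_M \<rightarrow> (\<Pi>\<^sub>E b\<in>UNIV. space (restrict_space borel {0..1::real}))"
    by (auto simp: space_Omega_M PiE_iff simp del: split_paired_All)
qed

lemma stationary_measure_space:
  "stationary_measure P \<Longrightarrow> a \<in> space P \<Longrightarrow> \<forall>b. 0 \<le> a b \<and> a b \<le> 1"
  by (simp add: stationary_measure_def space_Omega_M cong: sets_eq_imp_space_eq)

lemma borel_measurable_bond_energy:
  assumes "stationary_measure P" "stationary_field P u"
  shows "(\<lambda>a. bond_energy a (u a) b) \<in> borel_measurable P"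
proof -
  have sets: "sets P = sets Omega_M" using assms(1) by (simp add: stationary_measure_def)
  have [measurable]: "(\<lambda>a. a b') \<in> borel_measurable P" for b'
    using measurable_component_Omega_M measurable_restrict_space2_iff
    by (subst measurable_cong_sets[OF sets refl]) blast
  have [measurable]: "(\<lambda>a. u a x) \<in> borel_measurable P" for x
    using assms(2) by (simp add: stationary_field_def)
  show ?thesis by (unfold bond_energy_def grad_def) measurable
qed

lemma nn_integral_bond_energy_shift:
  assumes "stationary_measure P" "stationary_field P u"
  shows "(\<integral>\<^sup>+a. ennreal (bond_energy a (u a) (z, i)) \<partial>P)
    = (\<integral>\<^sup>+a. ennreal (bond_energy a (u a) (0, i)) \<partial>P)"
proof -
  let ?g = "\<lambda>a. ennreal (bond_energy a (u a) (0, i))"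
  have sets: "sets P = sets Omega_M" and invariant: "distr P P (cshift z) = P"
    using assms(1) by (auto simp: stationary_measure_def)
  have shift: "cshift z \<in> measurable P P"
    using cshift_measurable by (subst measurable_cong_sets[OF sets sets])
  have "(\<integral>\<^sup>+a. ?g a \<partial>P) = (\<integral>\<^sup>+a. ?g a \<partial>distr P P (cshift z))"
    by (simp add: invariant)
  also have "\<dots> = (\<integral>\<^sup>+a. ?g (cshift z a) \<partial>P)"
    using borel_measurable_bond_energy[OF assms] by (intro nn_integral_distr[OF shift]) simp
  also have "\<dots> = (\<integral>\<^sup>+a. ennreal (bond_energy a (u a) (z, i)) \<partial>P)"
  proof (rule nn_integral_cong_AE)
    have "AE a in P. u (cshift z a) (0 + unitv i) = u a (0 + unitv i + z)"
      and "AE a in P. u (cshift z a) 0 = u a (0 + z)"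
      using assms(2) by (simp_all only: stationary_field_def)
    then show "AE a in P. ?g (cshift z a) = ennreal (bond_energy a (u a) (z, i))"
      by eventually_elim
        (simp add: bond_energy_def grad_def xb_def yb_def cshift_def bshift_def add.commute)
  qed
  finally show ?thesis ..
qed

lemma nn_integral_box_energy:
  fixes P :: "('n::finite bond \<Rightarrow> real) measure"
  assumes "stationary_measure P" "stationary_field P u"
  shows "(\<integral>\<^sup>+a. ennreal (box_energy a (u a) x R) \<partial>P)
    = of_nat (card (box R :: (int^'n) set)) * (\<Sum>i\<in>UNIV. \<integral>\<^sup>+a. ennreal (bond_energy a (u a) (0, i)) \<partial>P)"
proof -
  note [measurable] = borel_measurable_bond_energy[OF assms]
  have "(\<integral>\<^sup>+a. ennreal (box_energy a (u a) x R) \<partial>P)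
      = (\<integral>\<^sup>+a. (\<Sum>z\<in>box R. \<Sum>i\<in>UNIV. ennreal (bond_energy a (u a) (x + z, i))) \<partial>P)"
    using stationary_measure_space[OF assms(1)]
    by (intro nn_integral_cong) (simp add: box_energy_def bond_energy_def sum_nonneg)
  also have "\<dots> = (\<Sum>z\<in>box R. \<integral>\<^sup>+a. (\<Sum>i\<in>UNIV. ennreal (bond_energy a (u a) (x + z, i))) \<partial>P)"
    by (rule nn_integral_sum) measurable
  also have "\<dots> = (\<Sum>z\<in>box R. \<Sum>i\<in>UNIV. \<integral>\<^sup>+a. ennreal (bond_energy a (u a) (x + z, i)) \<partial>P)"
    by (intro sum.cong refl nn_integral_sum) measurable
  also have "\<dots> = of_nat (card (box R :: (int^'n) set)) * (\<Sum>i\<in>UNIV. \<integral>\<^sup>+a. ennreal (bond_energy a (u a) (0, i)) \<partial>P)"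
    by (simp add: nn_integral_bond_energy_shift[OF assms, of "x + z" for z])
  finally show ?thesis .
qed

lemma summable_Cpd:
  assumes "p > real CARD('n::finite) + 1"
  shows "summable (Cpd p TYPE('n))"
proof -
  define d where "d = CARD('n)"
  define q where "q = 2 powr (1 - p) * 2 ^ d"
  have "q = 2 powr (1 - p + real d)"
    by (simp add: q_def powr_add powr_realpow)
  then have q: "0 \<le> q" "q < 1"
    using assms by (simp_all add: d_def powr_less_one)
  have bound: "norm (Cpd p TYPE('n) k) \<le> 8 ^ d * q ^ k" for k
  proof -
    have "real (card (box (2 ^ (k + 1)) :: (int^'n) set)) \<le> real (nat (2 * 2 ^ (k + 1) + 1) ^ d)"
      unfolding d_def using card_box_le of_nat_le_iff by blast
    also have "\<dots> = (2 * 2 ^ (k + 1) + 1) ^ d"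
      by simp
    also have "\<dots> \<le> (8 * 2 ^ k) ^ d"
      by (rule power_mono) (use one_le_power[of "2::real" k] in \<open>simp_all, linarith\<close>)
    also have "\<dots> = 8 ^ d * (2 ^ d) ^ k"
      by (simp add: power_mult_distrib flip: power_mult)
    finally have card: "real (card (box (2 ^ (k + 1)) :: (int^'n) set)) \<le> 8 ^ d * (2 ^ d) ^ k" .
    have "2 powr (real k * (1 - p)) = (2 powr (1 - p)) ^ k"
      by (simp add: powr_realpow[symmetric] powr_powr mult.commute)
    then have "Cpd p TYPE('n) k = (2 powr (1 - p)) ^ k * real (card (box (2 ^ (k + 1)) :: (int^'n) set))"
      by (simp add: Cpd_def)
    also have "\<dots> \<le> (2 powr (1 - p)) ^ k * (8 ^ d * (2 ^ d) ^ k)"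
      using card by (rule mult_left_mono) simp
    also have "\<dots> = 8 ^ d * q ^ k"
      by (simp add: q_def power_mult_distrib)
    finally show ?thesis
      by (simp add: Cpd_def)
  qed
  show ?thesis
    by (rule summable_comparison_test'[OF _ bound]) (use q in \<open>intro summable_mult summable_geometric, simp\<close>)
qed

theorem lemma5:
  fixes P :: "('n::finite bond \<Rightarrow> real) measure"
    and p :: real
    and u :: "('n bond \<Rightarrow> real) \<Rightarrow> int^'n \<Rightarrow> real"
    and b :: "'n bond"
  assumes "stationary_measure P"
    and "p > real CARD('n) + 1"
    and "stationary_field P u"
  shows "summable (Cpd p TYPE('n))
    \<and> (\<integral>\<^sup>+ a. ennreal ((grad (u a) b)\<^sup>2 * chem_dist_pow p a (xb b) (yb b)) \<partial>P)
      \<le> ennreal (suminf (Cpd p TYPE('n)))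
         * (\<Sum>i\<in>UNIV. \<integral>\<^sup>+ a. ennreal (a (0, i) * (grad (u a) (0, i))\<^sup>2) \<partial>P)"
proof
  show summable: "summable (Cpd p TYPE('n))"
    using assms(2) by (rule summable_Cpd)
  let ?I = "\<Sum>i\<in>UNIV. \<integral>\<^sup>+ a. ennreal (bond_energy a (u a) (0, i)) \<partial>P"
  let ?c = "\<lambda>k::nat. ennreal (2 powr (real k * (1 - p)))"
  let ?E = "\<lambda>k a. ennreal (box_energy a (u a) (xb b) (2 ^ (k + 1)))"
  note [measurable] = borel_measurable_bond_energy[OF assms(1,3)]
  have "xb b \<noteq> yb b" by (simp add: xb_def yb_def unitv_def)
  have "(\<integral>\<^sup>+ a. ennreal ((grad (u a) b)\<^sup>2 * chem_dist_pow p a (xb b) (yb b)) \<partial>P)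
      \<le> (\<integral>\<^sup>+ a. (\<Sum>k. ?c k * ?E k a) \<partial>P)"
  proof (rule nn_integral_mono)
    fix a assume "a \<in> space P"
    then show "ennreal ((grad (u a) b)\<^sup>2 * chem_dist_pow p a (xb b) (yb b)) \<le> (\<Sum>k. ?c k * ?E k a)"
      unfolding grad_def using \<open>xb b \<noteq> yb b\<close> stationary_measure_space[OF assms(1)] assms(2)
      by (intro ennreal_sq_diff_chem_dist_pow_le_suminf) auto
  qed
  also have "\<dots> = (\<Sum>k. \<integral>\<^sup>+ a. ?c k * ?E k a \<partial>P)"
    by (rule nn_integral_suminf) (unfold box_energy_def, measurable)
  also have "\<dots> = (\<Sum>k. ennreal (Cpd p TYPE('n) k) * ?I)"
    by (simp add: nn_integral_cmult box_energy_def nn_integral_box_energy[OF assms(1,3), unfolded box_energy_def]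
        Cpd_def ennreal_mult ennreal_of_nat_eq_real_of_nat mult.assoc)
  also have "\<dots> = (\<Sum>k. ennreal (Cpd p TYPE('n) k)) * ?I"
    by (rule ennreal_suminf_multc)
  also have "(\<Sum>k. ennreal (Cpd p TYPE('n) k)) = ennreal (suminf (Cpd p TYPE('n)))"
    by (rule suminf_ennreal2[OF _ summable]) (simp add: Cpd_def)
  finally show "(\<integral>\<^sup>+ a. ennreal ((grad (u a) b)\<^sup>2 * chem_dist_pow p a (xb b) (yb b)) \<partial>P)
      \<le> ennreal (suminf (Cpd p TYPE('n))) * (\<Sum>i\<in>UNIV. \<integral>\<^sup>+ a. ennreal (a (0, i) * (grad (u a) (0, i))\<^sup>2) \<partial>P)"
    by (simp add: bond_energy_def)
qed

end
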